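(* Let $f:2^V\to\mathbb{Z}_{\ge0}$ be a connectivity function, $W\subseteq V$, and $(C_1,C_2,C_3)$ a minimum $W$-improvement. Then for every set $W'$ such that $W'\subseteq W$ or $W'\subseteq V\setminus W$, and every $i\in\{1,2,3\}$, it holds that $f(W'\cap C_i)\le f(W')$.
   Context: A connectivity function $f:2^V\to\mathbb{Z}_{\ge0}$ ($V$ finite) satisfies $f(\emptyset)=0$, $f(X)=f(V\setminus X)$, and $f(X\cup Y)+f(X\cap Y)\le f(X)+f(Y)$. For $W\subseteq V$, a $W$-improvement is a tripartition $(C_1,C_2,C_3)$ of $V$ (pairwise disjoint, possibly empty, union $V$) with $f(C_i)<f(W)/2$, $f(C_i\cap W)<f(W)$, $f(C_i\cap(V\setminus W))<f(W)$ for each $i$. Its width is $\max_i f(C_i)$, its sum-width is $\sum_i f(C_i)$, and its arity is the number of nonempty $C_i$. A $W$-improvement is minimum if it has minimum width among all $W$-improvements, subject to that minimum arity, and subject to those minimum sum-width. *)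

theory Defs
  imports Main
begin

definition connectivity_function :: "'a set \<Rightarrow> ('a set \<Rightarrow> nat) \<Rightarrow> bool" where
  "connectivity_function V f \<longleftrightarrow> finite V \<and> f {} = 0 \<and>
     (\<forall>X. X \<subseteq> V \<longrightarrow> f X = f (V - X)) \<and>
     (\<forall>X Y. X \<subseteq> V \<longrightarrow> Y \<subseteq> V \<longrightarrow> f (X \<union> Y) + f (X \<inter> Y) \<le> f X + f Y)"

definition tripartition :: "'a set \<Rightarrow> 'a set \<times> 'a set \<times> 'a set \<Rightarrow> bool" where
  "tripartition V C \<longleftrightarrow> (case C of (C1, C2, C3) \<Rightarrow>
     C1 \<inter> C2 = {} \<and> C1 \<inter> C3 = {} \<and> C2 \<inter> C3 = {} \<and> C1 \<union> C2 \<union> C3 = V)"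

text \<open>f(C) < f(W)/2 is written as 2 f(C) < f(W).\<close>
definition improvement :: "'a set \<Rightarrow> ('a set \<Rightarrow> nat) \<Rightarrow> 'a set \<Rightarrow> 'a set \<times> 'a set \<times> 'a set \<Rightarrow> bool" where
  "improvement V f W C \<longleftrightarrow> tripartition V C \<and> (case C of (C1, C2, C3) \<Rightarrow>
     (\<forall>D \<in> {C1, C2, C3}. 2 * f D < f W \<and> f (D \<inter> W) < f W \<and> f (D \<inter> (V - W)) < f W))"

definition width :: "('a set \<Rightarrow> nat) \<Rightarrow> 'a set \<times> 'a set \<times> 'a set \<Rightarrow> nat" where
  "width f C = (case C of (C1, C2, C3) \<Rightarrow> max (f C1) (max (f C2) (f C3)))"

definition sum_width :: "('a set \<Rightarrow> nat) \<Rightarrow> 'a set \<times> 'a set \<times> 'a set \<Rightarrow> nat" where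
  "sum_width f C = (case C of (C1, C2, C3) \<Rightarrow> f C1 + f C2 + f C3)"

definition arity :: "'a set \<times> 'a set \<times> 'a set \<Rightarrow> nat" where
  "arity C = (case C of (C1, C2, C3) \<Rightarrow>
     (if C1 \<noteq> {} then 1 else 0) + (if C2 \<noteq> {} then 1 else 0) + (if C3 \<noteq> {} then 1 else 0))"

definition min_improvement :: "'a set \<Rightarrow> ('a set \<Rightarrow> nat) \<Rightarrow> 'a set \<Rightarrow> 'a set \<times> 'a set \<times> 'a set \<Rightarrow> bool" where
  "min_improvement V f W C \<longleftrightarrow> improvement V f W C \<and>
     (\<forall>D. improvement V f W D \<longrightarrow>
        width f C < width f D \<or>
        (width f C = width f D \<and> (arity C < arity D \<or>
          (arity C = arity D \<and> sum_width f C \<le> sum_width f D))))"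

end

theory Submission
  imports Defs
begin

text \<open>Suppose \<open>W' \<subseteq> W\<close> and \<open>f (W' \<inter> C\<^sub>1) > f W'\<close>. Take \<open>X\<close> of minimum
  connectivity with \<open>W' \<inter> C\<^sub>1 \<subseteq> X \<subseteq> W'\<close>, and move \<open>X\<close> into \<open>C\<^sub>1\<close>.
  Submodularity, with \<open>C\<^sub>1 \<inter> X = W' \<inter> C\<^sub>1\<close>, makes \<open>C\<^sub>1 \<union> X\<close> strictly cheaper
  than \<open>C\<^sub>1\<close>; posimodularity, with \<open>X - C\<^sub>i\<close> competing with \<open>X\<close>, makes
  \<open>C\<^sub>i - X\<close> no more expensive than \<open>C\<^sub>i\<close> (\<open>i = 2, 3\<close>); the same holds for the traces
  on \<open>W\<close>, while the traces on \<open>V - W\<close> do not change. The result is a \<open>W\<close>-improvement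
  of no larger width and arity but smaller sum-width. The case \<open>W' \<subseteq> V - W\<close> reduces
  to this one because \<open>W\<close>- and \<open>(V - W)\<close>-improvements coincide.\<close>

lemma connectivity_function_submodular:
  assumes "connectivity_function V f" "X \<subseteq> V" "Y \<subseteq> V"
  shows "f (X \<union> Y) + f (X \<inter> Y) \<le> f X + f Y"
  using assms unfolding connectivity_function_def by blast

lemma connectivity_function_compl:
  assumes "connectivity_function V f" "X \<subseteq> V"
  shows "f (V - X) = f X"
  using assms unfolding connectivity_function_def by metis

lemma connectivity_function_posimodular:
  assumes cf: "connectivity_function V f" and XV: "X \<subseteq> V" and YV: "Y \<subseteq> V"
  shows "f (X - Y) + f (Y - X) \<le> f X + f Y"
proof -
  have "f (X \<union> (V - Y)) + f (X \<inter> (V - Y)) \<le> f X + f (V - Y)"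
    using connectivity_function_submodular[OF cf XV] by blast
  moreover have "f (X \<union> (V - Y)) = f (Y - X)"
  proof -
    have "V - (X \<union> (V - Y)) = Y - X" using YV by blast
    then show ?thesis using connectivity_function_compl[OF cf, of "X \<union> (V - Y)"] XV by auto
  qed
  moreover have "X \<inter> (V - Y) = X - Y" using XV by blast
  ultimately show ?thesis using connectivity_function_compl[OF cf YV] by simp
qed

lemma connectivity_function_union_less:
  assumes "connectivity_function V f" "X \<subseteq> V" "Y \<subseteq> V" "f X < f (Y \<inter> X)"
  shows "f (Y \<union> X) < f Y"
  using connectivity_function_submodular[of V f Y X] assms by simp

lemma connectivity_function_diff_le:
  assumes "connectivity_function V f" "X \<subseteq> V" "Y \<subseteq> V" "f X \<le> f (X - Y)"
  shows "f (Y - X) \<le> f Y"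
  using connectivity_function_posimodular[of V f X Y] assms by simp

lemma improvement_compl:
  assumes cf: "connectivity_function V f" and WV: "W \<subseteq> V"
  shows "improvement V f (V - W) C \<longleftrightarrow> improvement V f W C"
proof -
  obtain C1 C2 C3 where C: "C = (C1, C2, C3)" by (cases C) auto
  have "D \<inter> (V - (V - W)) = D \<inter> W" if "D \<subseteq> V" for D using that WV by blast
  moreover have "tripartition V C \<Longrightarrow> C1 \<subseteq> V \<and> C2 \<subseteq> V \<and> C3 \<subseteq> V"
    unfolding tripartition_def C by auto
  ultimately show ?thesis
    unfolding improvement_def C connectivity_function_compl[OF cf WV] by auto
qed

lemma min_improvement_compl:
  assumes "connectivity_function V f" "W \<subseteq> V"
  shows "min_improvement V f (V - W) C \<longleftrightarrow> min_improvement V f W C"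
  unfolding min_improvement_def improvement_compl[OF assms] ..

lemma min_improvement_swap12:
  assumes "min_improvement V f W (C1, C2, C3)"
  shows "min_improvement V f W (C2, C1, C3)"
proof -
  have "improvement V f W (C2, C1, C3) = improvement V f W (C1, C2, C3)"
    unfolding improvement_def tripartition_def by (auto simp: insert_commute)
  moreover have "width f (C2, C1, C3) = width f (C1, C2, C3)"
    unfolding width_def by (simp add: max.left_commute)
  moreover have "arity (C2, C1, C3) = arity (C1, C2, C3)"
    unfolding arity_def by simp
  moreover have "sum_width f (C2, C1, C3) = sum_width f (C1, C2, C3)"
    unfolding sum_width_def by simp
  ultimately show ?thesis using assms unfolding min_improvement_def by simp
qed

lemma min_improvement_swap13:
  assumes "min_improvement V f W (C1, C2, C3)"
  shows "min_improvement V f W (C3, C2, C1)"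
proof -
  have "improvement V f W (C3, C2, C1) = improvement V f W (C1, C2, C3)"
    unfolding improvement_def tripartition_def by (auto simp: insert_commute)
  moreover have "width f (C3, C2, C1) = width f (C1, C2, C3)"
    unfolding width_def by (simp add: max.left_commute max.commute)
  moreover have "arity (C3, C2, C1) = arity (C1, C2, C3)"
    unfolding arity_def by simp
  moreover have "sum_width f (C3, C2, C1) = sum_width f (C1, C2, C3)"
    unfolding sum_width_def by simp
  ultimately show ?thesis using assms unfolding min_improvement_def by simp
qed

lemma min_improvement_no_better:
  assumes "min_improvement V f W C" "improvement V f W D"
    and "width f D \<le> width f C" "arity D \<le> arity C" "sum_width f D < sum_width f C"
  shows False
  using assms unfolding min_improvement_def by fastforce

lemma improvement_absorb:
  assumes cf: "connectivity_function V f" and WV: "W \<subseteq> V"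
    and imp: "improvement V f W (C1, C2, C3)"
    and XW: "X \<subseteq> W"
    and less1: "f X < f (C1 \<inter> X)"
    and le2: "f X \<le> f (X - C2)" and le3: "f X \<le> f (X - C3)"
  shows "improvement V f W (C1 \<union> X, C2 - X, C3 - X)"
    and "f (C1 \<union> X) < f C1" "f (C2 - X) \<le> f C2" "f (C3 - X) \<le> f C3"
proof -
  have XV: "X \<subseteq> V" using XW WV by blast
  have tri: "tripartition V (C1 \<union> X, C2 - X, C3 - X)" "C1 \<subseteq> V" "C2 \<subseteq> V" "C3 \<subseteq> V"
    using imp XV unfolding improvement_def tripartition_def by auto
  have bounds: "2 * f D < f W" "f (D \<inter> W) < f W" "f (D \<inter> (V - W)) < f W"
    if "D \<in> {C1, C2, C3}" for D
    using imp that unfolding improvement_def by auto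
  show less: "f (C1 \<union> X) < f C1"
    using connectivity_function_union_less[OF cf XV \<open>C1 \<subseteq> V\<close> less1] .
  have lessW: "f ((C1 \<inter> W) \<union> X) < f (C1 \<inter> W)"
  proof (rule connectivity_function_union_less[OF cf XV])
    show "C1 \<inter> W \<subseteq> V" using \<open>C1 \<subseteq> V\<close> by blast
    have "C1 \<inter> W \<inter> X = C1 \<inter> X" using XW by blast
    then show "f X < f (C1 \<inter> W \<inter> X)" using less1 by simp
  qed
  have diff_le: "f (C - X) \<le> f C" "f ((C \<inter> W) - X) \<le> f (C \<inter> W)"
    if "C \<subseteq> V" "f X \<le> f (X - C)" for C
  proof -
    show "f (C - X) \<le> f C" using connectivity_function_diff_le[OF cf XV that] .
    have "X - C \<inter> W = X - C" using XW by blast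
    then show "f ((C \<inter> W) - X) \<le> f (C \<inter> W)"
      using connectivity_function_diff_le[OF cf XV, of "C \<inter> W"] that by auto
  qed
  show "f (C2 - X) \<le> f C2" "f (C3 - X) \<le> f C3"
    using diff_le \<open>C2 \<subseteq> V\<close> \<open>C3 \<subseteq> V\<close> le2 le3 by auto
  have union_ok: "2 * f (C1 \<union> X) < f W" "f ((C1 \<union> X) \<inter> W) < f W"
    "f ((C1 \<union> X) \<inter> (V - W)) < f W"
  proof -
    have "(C1 \<union> X) \<inter> W = (C1 \<inter> W) \<union> X" "(C1 \<union> X) \<inter> (V - W) = C1 \<inter> (V - W)"
      using XW by auto
    then show "2 * f (C1 \<union> X) < f W" "f ((C1 \<union> X) \<inter> W) < f W"
      "f ((C1 \<union> X) \<inter> (V - W)) < f W"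
      using less lessW bounds[of C1] by auto
  qed
  have diff_ok: "2 * f (C - X) < f W" "f ((C - X) \<inter> W) < f W" "f ((C - X) \<inter> (V - W)) < f W"
    if "C \<in> {C2, C3}" "C \<subseteq> V" "f X \<le> f (X - C)" for C
  proof -
    have "(C - X) \<inter> W = (C \<inter> W) - X" "(C - X) \<inter> (V - W) = C \<inter> (V - W)"
      using XW by auto
    then show "2 * f (C - X) < f W" "f ((C - X) \<inter> W) < f W" "f ((C - X) \<inter> (V - W)) < f W"
      using diff_le[OF that(2,3)] bounds[of C] that(1) by auto
  qed
  show "improvement V f W (C1 \<union> X, C2 - X, C3 - X)"
    unfolding improvement_def
    using tri union_ok diff_ok[of C2] diff_ok[of C3] le2 le3 by auto
qed

lemma min_improvement_inter_le:
  assumes cf: "connectivity_function V f" and WV: "W \<subseteq> V"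
    and mi: "min_improvement V f W (C1, C2, C3)" and W'W: "W' \<subseteq> W"
  shows "f (W' \<inter> C1) \<le> f W'"
proof (rule ccontr)
  assume viol: "\<not> f (W' \<inter> C1) \<le> f W'"
  define S where "S = {X. W' \<inter> C1 \<subseteq> X \<and> X \<subseteq> W'}"
  obtain X where "X \<in> S" and Xmin: "\<And>Y. Y \<in> S \<Longrightarrow> f X \<le> f Y"
    using ex_has_least_nat[of "\<lambda>X. X \<in> S" W' f] unfolding S_def by blast
  then have XW': "X \<subseteq> W'" and "W' \<inter> C1 \<subseteq> X" unfolding S_def by auto
  have tri: "C1 \<inter> C2 = {}" "C1 \<inter> C3 = {}"
    using mi unfolding min_improvement_def improvement_def tripartition_def by auto
  have less1: "f X < f (C1 \<inter> X)"
  proof -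
    have "f X \<le> f W'" using Xmin unfolding S_def by blast
    moreover have "C1 \<inter> X = W' \<inter> C1" using XW' \<open>W' \<inter> C1 \<subseteq> X\<close> by blast
    ultimately show ?thesis using viol by simp
  qed
  have "X - C2 \<in> S" "X - C3 \<in> S" using \<open>X \<in> S\<close> tri unfolding S_def by blast+
  then have le2: "f X \<le> f (X - C2)" and le3: "f X \<le> f (X - C3)" using Xmin by auto
  have imp: "improvement V f W (C1, C2, C3)" using mi unfolding min_improvement_def by blast
  note absorb = improvement_absorb[OF cf WV imp _ less1 le2 le3]
  have XW: "X \<subseteq> W" using XW' W'W by blast
  have "f {} = 0" using cf unfolding connectivity_function_def by blast
  then have "C1 \<noteq> {}" using less1 by auto
  then have "arity (C1 \<union> X, C2 - X, C3 - X) \<le> arity (C1, C2, C3)"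
    unfolding arity_def by auto
  moreover have "width f (C1 \<union> X, C2 - X, C3 - X) \<le> width f (C1, C2, C3)"
    using absorb(2-4)[OF XW] unfolding width_def prod.case by (intro max.mono) auto
  moreover have "sum_width f (C1 \<union> X, C2 - X, C3 - X) < sum_width f (C1, C2, C3)"
    using absorb(2-4)[OF XW] unfolding sum_width_def by simp
  ultimately show False
    using min_improvement_no_better[OF mi absorb(1)[OF XW]] by blast
qed

theorem lemma2:
  fixes V W W' C1 C2 C3 :: "'a set" and f :: "'a set \<Rightarrow> nat"
  assumes "connectivity_function V f"
    and "W \<subseteq> V"
    and "min_improvement V f W (C1, C2, C3)"
    and "W' \<subseteq> W \<or> W' \<subseteq> V - W"
  shows "\<forall>C \<in> {C1, C2, C3}. f (W' \<inter> C) \<le> f W'"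
proof -
  obtain U where mi: "min_improvement V f U (C1, C2, C3)" and "U \<subseteq> V" "W' \<subseteq> U"
    using assms(2-4) min_improvement_compl[OF assms(1,2)] by (metis Diff_subset)
  note inter_le = min_improvement_inter_le[OF assms(1) \<open>U \<subseteq> V\<close> _ \<open>W' \<subseteq> U\<close>]
  have "f (W' \<inter> C1) \<le> f W'" "f (W' \<inter> C2) \<le> f W'" "f (W' \<inter> C3) \<le> f W'"
    using inter_le[OF mi] inter_le[OF min_improvement_swap12[OF mi]]
      inter_le[OF min_improvement_swap13[OF mi]] by auto
  then show ?thesis by simp
qed

end
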